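(* Let $G=(V,E)$ be a finite directed graph and let $R(G)$ denote its root. Then $R(G)$ is the smallest subset $S\subseteq V$ (with respect to inclusion) satisfying both of the following conditions: (i) for every $v\in V$ there exist $w\in S$ and a walk from $w$ to $v$ in $G$; (ii) if $v\in S$, $w\in V$ and $(w,v)\in E$, then $w\in S$.
   Context: A directed graph (digraph) is a pair $G=(V,E)$ with $V$ a finite set and $E\subseteq V\times V$; loops $(v,v)$ are allowed. A walk from $v_0$ to $v_n$ is a sequence $(v_0,\dots,v_n)$ of vertices, $n\ge 0$, with $(v_{i-1},v_i)\in E$ for all $i\in\{1,\dots,n\}$; write $v\leadsto w$ if there is a walk from $v$ to $w$. Define $v\sim w$ iff $v\leadsto w$ and $w\leadsto v$ (strongly connected components). The quotient graph $G^{SCC}=(V/_\sim,E^{SCC})$ has edges $(P,Q)$ for $P\ne Q$ such that $(p,q)\in E$ for some $p\in P$, $q\in Q$. The source of a digraph $H=(W,F)$ is $\mathrm{source}(H)=\{v\in W: \text{no edge of }F\text{ ends in }v\}$. The root of $G$ is $R(G):=\bigcup \mathrm{source}(G^{SCC})\subseteq V$, i.e. the union of those strongly connected components that have no incoming edge from another component. *)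

theory Defs
  imports Main
begin

text \<open>A digraph is a pair (V, E) with V a finite set and E a subset of V x V.\<close>

definition is_walk :: "'a set \<Rightarrow> ('a \<times> 'a) set \<Rightarrow> 'a list \<Rightarrow> bool" where
  "is_walk V E xs \<longleftrightarrow> xs \<noteq> [] \<and> set xs \<subseteq> V \<and>
     (\<forall>i. Suc i < length xs \<longrightarrow> (xs ! i, xs ! Suc i) \<in> E)"

definition reach :: "'a set \<Rightarrow> ('a \<times> 'a) set \<Rightarrow> 'a \<Rightarrow> 'a \<Rightarrow> bool" where
  "reach V E v w \<longleftrightarrow> (\<exists>xs. is_walk V E xs \<and> hd xs = v \<and> last xs = w)"

definition scc_rel :: "'a set \<Rightarrow> ('a \<times> 'a) set \<Rightarrow> ('a \<times> 'a) set" where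
  "scc_rel V E = {(v, w). v \<in> V \<and> w \<in> V \<and> reach V E v w \<and> reach V E w v}"

definition scc_vertices :: "'a set \<Rightarrow> ('a \<times> 'a) set \<Rightarrow> 'a set set" where
  "scc_vertices V E = V // scc_rel V E"

definition scc_edges :: "'a set \<Rightarrow> ('a \<times> 'a) set \<Rightarrow> ('a set \<times> 'a set) set" where
  "scc_edges V E = {(P, Q). P \<in> scc_vertices V E \<and> Q \<in> scc_vertices V E \<and> P \<noteq> Q \<and>
      (\<exists>p\<in>P. \<exists>q\<in>Q. (p, q) \<in> E)}"

definition source :: "'b set \<Rightarrow> ('b \<times> 'b) set \<Rightarrow> 'b set" where
  "source W F = {v \<in> W. \<not> (\<exists>u. (u, v) \<in> F)}"

definition root :: "'a set \<Rightarrow> ('a \<times> 'a) set \<Rightarrow> 'a set" where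
  "root V E = \<Union> (source (scc_vertices V E) (scc_edges V E))"

end

(*
  Call a vertex x initial if it can reach back every vertex that reaches it. When
  E \<subseteq> V \<times> V, a vertex lies in a source component of the condensation iff it is initial,
  because a component has no incoming edge iff it is closed under predecessors. Predecessors
  of initial vertices are initial, and in a finite graph every vertex has an initial ancestor,
  namely an ancestor with the fewest ancestors. Finally, if S is closed under predecessors and
  contains some ancestor w of an initial vertex x, then x reaches w and hence lies in S.
*)
theory Submission
  imports Defs
begin

lemma is_walk_iff_successively:
  "is_walk V E xs \<longleftrightarrow> xs \<noteq> [] \<and> set xs \<subseteq> V \<and> successively (\<lambda>x y. (x, y) \<in> E) xs"
  by (simp add: is_walk_def successively_conv_nth)

lemma successively_imp_rtrancl:
  "successively (\<lambda>x y. (x, y) \<in> E) (x # xs) \<Longrightarrow> (x, last (x # xs)) \<in> E\<^sup>*"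
  by (induction xs arbitrary: x) (auto intro: converse_rtrancl_into_rtrancl)

lemma rtrancl_imp_successively:
  assumes "(v, w) \<in> E\<^sup>*"
  shows "\<exists>xs. successively (\<lambda>x y. (x, y) \<in> E) (v # xs) \<and> last (v # xs) = w
    \<and> set xs \<subseteq> Range E"
  using assms
proof (induction rule: converse_rtrancl_induct)
  case base
  show ?case by (intro exI[of _ "[]"]) simp
next
  case (step u v)
  then obtain xs where "successively (\<lambda>x y. (x, y) \<in> E) (v # xs)" "last (v # xs) = w"
    "set xs \<subseteq> Range E"
    by blast
  with step.hyps(1) show ?case
    by (intro exI[of _ "v # xs"]) auto
qed

lemma reach_iff_rtrancl:
  assumes "E \<subseteq> V \<times> V"
  shows "reach V E v w \<longleftrightarrow> v \<in> V \<and> (v, w) \<in> E\<^sup>*"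
proof
  assume "reach V E v w"
  then obtain xs where "is_walk V E (v # xs)" "last (v # xs) = w"
    unfolding reach_def is_walk_def by (auto simp: neq_Nil_conv)
  then show "v \<in> V \<and> (v, w) \<in> E\<^sup>*"
    unfolding is_walk_iff_successively using successively_imp_rtrancl by fastforce
next
  assume v: "v \<in> V \<and> (v, w) \<in> E\<^sup>*"
  then obtain xs where xs: "successively (\<lambda>x y. (x, y) \<in> E) (v # xs)" "last (v # xs) = w"
    "set xs \<subseteq> Range E"
    using rtrancl_imp_successively by metis
  have "set (v # xs) \<subseteq> V"
    using v xs(3) assms by auto
  with xs show "reach V E v w"
    unfolding reach_def is_walk_iff_successively by (intro exI[of _ "v # xs"]) simp
qed

definition pred_closed :: "('a \<times> 'a) set \<Rightarrow> 'a set \<Rightarrow> bool" where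
  "pred_closed E S \<longleftrightarrow> (\<forall>a b. (a, b) \<in> E \<longrightarrow> b \<in> S \<longrightarrow> a \<in> S)"

lemma pred_closed_rtrancl:
  assumes "pred_closed E S" and "(a, b) \<in> E\<^sup>*" and "b \<in> S"
  shows "a \<in> S"
  using assms(2,3)
  by (induction rule: converse_rtrancl_induct) (use assms(1) in \<open>auto simp: pred_closed_def\<close>)

definition initial_vertex :: "('a \<times> 'a) set \<Rightarrow> 'a \<Rightarrow> bool" where
  "initial_vertex E x \<longleftrightarrow> (\<forall>u. (u, x) \<in> E\<^sup>* \<longrightarrow> (x, u) \<in> E\<^sup>*)"

lemma initial_vertex_rtrancl_pred:
  assumes "initial_vertex E v" and "(w, v) \<in> E\<^sup>*"
  shows "initial_vertex E w"
  unfolding initial_vertex_def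
proof (intro allI impI)
  fix u
  assume "(u, w) \<in> E\<^sup>*"
  with assms have "(v, u) \<in> E\<^sup>*"
    unfolding initial_vertex_def by (meson rtrancl_trans)
  with assms(2) show "(w, u) \<in> E\<^sup>*"
    by (rule rtrancl_trans)
qed

lemma exists_initial_ancestor:
  assumes "finite {u. (u, v) \<in> E\<^sup>*}"
  obtains w where "(w, v) \<in> E\<^sup>*" and "initial_vertex E w"
proof -
  define anc where "anc x = {u. (u, x) \<in> E\<^sup>*}" for x
  obtain w where w: "(w, v) \<in> E\<^sup>*"
    and w_min: "\<And>u. (u, v) \<in> E\<^sup>* \<Longrightarrow> card (anc w) \<le> card (anc u)"
    using ex_has_least_nat[of "\<lambda>u. (u, v) \<in> E\<^sup>*" v "\<lambda>u. card (anc u)"] by blast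
  have "(w, u) \<in> E\<^sup>*" if u: "(u, w) \<in> E\<^sup>*" for u
  proof (rule ccontr)
    assume wu: "(w, u) \<notin> E\<^sup>*"
    have "anc u \<subseteq> anc w" and "anc w \<subseteq> anc v"
      using u w unfolding anc_def by (auto intro: rtrancl_trans)
    moreover have "w \<in> anc w - anc u"
      using wu unfolding anc_def by simp
    ultimately have "card (anc u) < card (anc w)"
      using assms unfolding anc_def by (metis Diff_iff finite_subset psubsetI psubset_card_mono)
    moreover have "(u, v) \<in> E\<^sup>*"
      using u w by (rule rtrancl_trans)
    ultimately show False
      using w_min by (simp add: not_le[symmetric])
  qed
  with w show thesis
    using that unfolding initial_vertex_def by blast
qed

lemma finite_ancestors:
  assumes "finite E"
  shows "finite {u. (u, v) \<in> E\<^sup>*}"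
proof -
  have "{u. (u, v) \<in> E\<^sup>*} = (E\<inverse>)\<^sup>* `` {v}"
    by (auto simp: rtrancl_converse)
  with assms show ?thesis
    by simp
qed

lemma initial_vertex_mem_pred_closed:
  assumes "initial_vertex E x" and "pred_closed E S" and "(w, x) \<in> E\<^sup>*" and "w \<in> S"
  shows "x \<in> S"
proof -
  from assms(1,3) have "(x, w) \<in> E\<^sup>*"
    unfolding initial_vertex_def by blast
  with assms(2,4) show ?thesis
    using pred_closed_rtrancl by metis
qed

lemma scc_rel_eq:
  assumes "E \<subseteq> V \<times> V"
  shows "scc_rel V E = {(v, w). v \<in> V \<and> w \<in> V \<and> (v, w) \<in> E\<^sup>* \<and> (w, v) \<in> E\<^sup>*}"
  using reach_iff_rtrancl[OF assms] unfolding scc_rel_def by auto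

lemma equiv_scc_rel:
  assumes "E \<subseteq> V \<times> V"
  shows "equiv V (scc_rel V E)"
  by (rule equivI) (auto simp: scc_rel_eq[OF assms] refl_on_def sym_def trans_def
      intro: rtrancl_trans)

lemma source_scc_iff_pred_closed:
  assumes E: "E \<subseteq> V \<times> V" and P: "P \<in> scc_vertices V E"
  shows "P \<in> source (scc_vertices V E) (scc_edges V E) \<longleftrightarrow> pred_closed E P"
proof
  assume src: "P \<in> source (scc_vertices V E) (scc_edges V E)"
  show "pred_closed E P"
    unfolding pred_closed_def
  proof (intro allI impI, rule ccontr)
    fix a b
    assume ab: "(a, b) \<in> E" "b \<in> P" "a \<notin> P"
    let ?Q = "scc_rel V E `` {a}"
    have "a \<in> V"
      using ab(1) E by auto
    then have "?Q \<in> scc_vertices V E" and "a \<in> ?Q"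
      using equiv_class_self[OF equiv_scc_rel[OF E]]
      by (auto simp: scc_vertices_def intro: quotientI)
    with ab P have "(?Q, P) \<in> scc_edges V E"
      unfolding scc_edges_def by blast
    with src show False
      unfolding source_def by blast
  qed
next
  assume closed: "pred_closed E P"
  have "Q = P" if "(Q, P) \<in> scc_edges V E" for Q
  proof -
    obtain q p where "Q \<in> scc_vertices V E" "q \<in> Q" "p \<in> P" "(q, p) \<in> E"
      using \<open>(Q, P) \<in> scc_edges V E\<close> unfolding scc_edges_def by blast
    with closed have "Q \<inter> P \<noteq> {}"
      unfolding pred_closed_def by blast
    with quotient_disj[OF equiv_scc_rel[OF E]] P \<open>Q \<in> scc_vertices V E\<close> show "Q = P"
      unfolding scc_vertices_def by blast
  qed
  with P show "P \<in> source (scc_vertices V E) (scc_edges V E)"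
    unfolding source_def scc_edges_def by blast
qed

lemma pred_closed_scc_class_iff_initial_vertex:
  assumes E: "E \<subseteq> V \<times> V" and "x \<in> V"
  shows "pred_closed E (scc_rel V E `` {x}) \<longleftrightarrow> initial_vertex E x"
proof
  assume closed: "pred_closed E (scc_rel V E `` {x})"
  have "x \<in> scc_rel V E `` {x}"
    using equiv_class_self[OF equiv_scc_rel[OF E] \<open>x \<in> V\<close>] .
  with closed have "u \<in> scc_rel V E `` {x}" if "(u, x) \<in> E\<^sup>*" for u
    using that pred_closed_rtrancl by metis
  then show "initial_vertex E x"
    unfolding initial_vertex_def scc_rel_eq[OF E] by blast
next
  assume "initial_vertex E x"
  then show "pred_closed E (scc_rel V E `` {x})"
    using E unfolding pred_closed_def scc_rel_eq[OF E] initial_vertex_def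
    by (blast intro: converse_rtrancl_into_rtrancl rtrancl_trans)
qed

lemma root_eq_initial_vertices:
  assumes E: "E \<subseteq> V \<times> V"
  shows "root V E = {x \<in> V. initial_vertex E x}"
proof -
  note equiv = equiv_scc_rel[OF E]
  have "x \<in> root V E \<longleftrightarrow> x \<in> V \<and> initial_vertex E x" for x
  proof -
    have "x \<in> P \<longleftrightarrow> x \<in> V \<and> P = scc_rel V E `` {x}" if "P \<in> scc_vertices V E" for P
    proof -
      from that obtain y where "y \<in> V" "P = scc_rel V E `` {y}"
        unfolding scc_vertices_def by (rule quotientE)
      then show ?thesis
        using equiv_class_self[OF equiv] equiv_class_eq_iff[OF equiv] by auto
    qed
    then have "x \<in> root V E
        \<longleftrightarrow> x \<in> V \<and> scc_rel V E `` {x} \<in> source (scc_vertices V E) (scc_edges V E)"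
      unfolding root_def source_def by blast
    also have "\<dots> \<longleftrightarrow> x \<in> V \<and> initial_vertex E x"
    proof (cases "x \<in> V")
      case True
      then have "scc_rel V E `` {x} \<in> scc_vertices V E"
        unfolding scc_vertices_def by (rule quotientI)
      with True show ?thesis
        using source_scc_iff_pred_closed[OF E] pred_closed_scc_class_iff_initial_vertex[OF E]
        by simp
    qed simp
    finally show ?thesis .
  qed
  then show ?thesis
    by blast
qed

theorem theorem2p4:
  fixes V :: "'a set" and E :: "('a \<times> 'a) set"
  assumes "finite V" and "E \<subseteq> V \<times> V"
  shows "root V E \<subseteq> V
    \<and> (\<forall>v\<in>V. \<exists>w\<in>root V E. reach V E w v)
    \<and> (\<forall>v w. v \<in> root V E \<and> w \<in> V \<and> (w, v) \<in> E \<longrightarrow> w \<in> root V E)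
    \<and> (\<forall>S. S \<subseteq> V \<and> (\<forall>v\<in>V. \<exists>w\<in>S. reach V E w v)
          \<and> (\<forall>v w. v \<in> S \<and> w \<in> V \<and> (w, v) \<in> E \<longrightarrow> w \<in> S)
          \<longrightarrow> root V E \<subseteq> S)"
proof -
  note root_eq = root_eq_initial_vertices[OF assms(2)]
    and reach_iff = reach_iff_rtrancl[OF assms(2)]
  have "finite E"
    using finite_subset[OF assms(2)] assms(1) by simp
  have V_closed: "pred_closed E V"
    using assms(2) unfolding pred_closed_def by blast
  have covers: "\<exists>w\<in>root V E. reach V E w v" if "v \<in> V" for v
  proof -
    obtain w where "(w, v) \<in> E\<^sup>*" "initial_vertex E w"
      using exists_initial_ancestor[OF finite_ancestors[OF \<open>finite E\<close>]] .
    moreover from this(1) have "w \<in> V"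
      using pred_closed_rtrancl[OF V_closed] \<open>v \<in> V\<close> by blast
    ultimately show ?thesis
      by (auto simp: root_eq reach_iff)
  qed
  have minimal: "root V E \<subseteq> S"
    if cover: "\<forall>v\<in>V. \<exists>w\<in>S. reach V E w v"
      and closed: "\<forall>v w. v \<in> S \<and> w \<in> V \<and> (w, v) \<in> E \<longrightarrow> w \<in> S" for S
  proof
    fix x
    assume "x \<in> root V E"
    with cover obtain w where "initial_vertex E x" "w \<in> S" "(w, x) \<in> E\<^sup>*"
      by (auto simp: root_eq reach_iff)
    moreover have "pred_closed E S"
      using closed assms(2) unfolding pred_closed_def by blast
    ultimately show "x \<in> S"
      using initial_vertex_mem_pred_closed by metis
  qed
  have pred_closed: "w \<in> root V E" if "v \<in> root V E" "w \<in> V" "(w, v) \<in> E" for v w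
    using that initial_vertex_rtrancl_pred[OF _ r_into_rtrancl, of E v w] by (simp add: root_eq)
  have "root V E \<subseteq> V"
    by (auto simp: root_eq)
  then show ?thesis
    using covers pred_closed minimal by (intro conjI) blast+
qed

end
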